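(* Let $n,m\in\mathbb{Z}$ be such that $k:=\gcd(n,m)$ satisfies $|k|\ge2$. Then the group $\langle a,b\mid (ab)^n=(ba)^m\rangle$ is big.
   Context: A group is called big if it contains a non-abelian free subgroup. *)

theory Defs
  imports "HOL-Algebra.Algebra"
begin

text \<open>A letter (s, e) stands for s if e = False and for s inverse if e = True.\<close>

fun reduced_word :: "('a \<times> bool) list \<Rightarrow> bool" where
  "reduced_word (x # y # ys) =
     (\<not> (fst x = fst y \<and> snd x \<noteq> snd y) \<and> reduced_word (y # ys))"
| "reduced_word _ = True"

fun push_letter :: "('a \<times> bool) \<Rightarrow> ('a \<times> bool) list \<Rightarrow> ('a \<times> bool) list" where
  "push_letter x [] = [x]"
| "push_letter x (y # ys) =
     (if fst x = fst y \<and> snd x \<noteq> snd y then ys else x # y # ys)"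

definition word_mult :: "('a \<times> bool) list \<Rightarrow> ('a \<times> bool) list \<Rightarrow> ('a \<times> bool) list" where
  "word_mult xs ys = foldr push_letter xs ys"

definition free_group :: "('a \<times> bool) list monoid" where
  "free_group = \<lparr>carrier = {w. reduced_word w}, monoid.mult = word_mult, one = []\<rparr>"

definition gen_a :: "(bool \<times> bool) list" where "gen_a = [(False, False)]"
definition gen_b :: "(bool \<times> bool) list" where "gen_b = [(True, False)]"

definition relator :: "int \<Rightarrow> int \<Rightarrow> (bool \<times> bool) list" where
  "relator n m =
     ((gen_a \<otimes>\<^bsub>free_group\<^esub> gen_b) [^]\<^bsub>free_group\<^esub> n) \<otimes>\<^bsub>free_group\<^esub>
       inv\<^bsub>free_group\<^esub> ((gen_b \<otimes>\<^bsub>free_group\<^esub> gen_a) [^]\<^bsub>free_group\<^esub> m)"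

definition relator_closure :: "int \<Rightarrow> int \<Rightarrow> (bool \<times> bool) list set" where
  "relator_closure n m =
     generate free_group
       {g \<otimes>\<^bsub>free_group\<^esub> relator n m \<otimes>\<^bsub>free_group\<^esub> inv\<^bsub>free_group\<^esub> g | g. g \<in> carrier free_group}"

definition one_relator_group :: "int \<Rightarrow> int \<Rightarrow> (bool \<times> bool) list set monoid" where
  "one_relator_group n m = free_group Mod (relator_closure n m)"

definition eval_word :: "('a, 'b) monoid_scheme \<Rightarrow> ('a \<times> bool) list \<Rightarrow> 'a" where
  "eval_word G w =
     foldr (\<lambda>(s, e) acc. (if e then inv\<^bsub>G\<^esub> s else s) \<otimes>\<^bsub>G\<^esub> acc) w \<one>\<^bsub>G\<^esub>"

definition free_basis :: "('a, 'b) monoid_scheme \<Rightarrow> 'a set \<Rightarrow> bool" where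
  "free_basis G S \<longleftrightarrow> S \<subseteq> carrier G \<and>
     (\<forall>w. w \<noteq> [] \<and> reduced_word w \<and> fst ` set w \<subseteq> S \<longrightarrow> eval_word G w \<noteq> \<one>\<^bsub>G\<^esub>)"

definition big :: "('a, 'b) monoid_scheme \<Rightarrow> bool" where
  "big G \<longleftrightarrow> (\<exists>H S. subgroup H G \<and> H = generate G S \<and> free_basis G S \<and>
     \<not> (\<forall>x\<in>H. \<forall>y\<in>H. x \<otimes>\<^bsub>G\<^esub> y = y \<otimes>\<^bsub>G\<^esub> x))"

end

theory Submission
  imports Defs
begin

text \<open>Let k = gcd n m \<ge> 2 and let F(x_0, ..., x_{k-1}) \<rtimes> \<int>/k be the semidirect product in
  which the generator t of \<int>/k shifts the indices of the free generators cyclically. Sending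
  a \<mapsto> x_0 and b \<mapsto> x_0^-1 t gives ab \<mapsto> t and ba \<mapsto> x_0^-1 t x_0, both of order k, which
  divides n and m; so this is a homomorphism from the one-relator group. It sends a and
  (ab) a (ab)^-1 to the free generators x_0 and x_1, hence no nontrivial reduced word in these
  two elements is trivial, and they freely generate a non-abelian free subgroup.\<close>

section \<open>Free reduction\<close>

definition letter_inv :: "'a \<times> bool \<Rightarrow> 'a \<times> bool" where
  "letter_inv x = (fst x, \<not> snd x)"

lemma letter_inv_letter_inv [simp]: "letter_inv (letter_inv x) = x"
  by (simp add: letter_inv_def)

lemma push_letter_Cons: "push_letter x (y # ys) = (if y = letter_inv x then ys else x # y # ys)"
  by (cases x; cases y) (auto simp: letter_inv_def)

lemma reduced_word_Cons_Cons:
  "reduced_word (x # y # ys) \<longleftrightarrow> y \<noteq> letter_inv x \<and> reduced_word (y # ys)"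
  by (cases x; cases y) (auto simp: letter_inv_def)

declare push_letter.simps(2) [simp del] reduced_word.simps(1) [simp del]
declare push_letter_Cons [simp] reduced_word_Cons_Cons [simp]

lemma reduced_word_tl: "reduced_word (x # ys) \<Longrightarrow> reduced_word ys"
  by (cases ys) auto

lemma reduced_word_push_letter: "reduced_word w \<Longrightarrow> reduced_word (push_letter x w)"
  by (cases w) (auto dest: reduced_word_tl)

lemma push_letter_reduced: "reduced_word (x # w) \<Longrightarrow> push_letter x w = x # w"
  by (cases w) auto

lemma push_letter_inv_cancel:
  assumes "reduced_word w"
  shows "push_letter (letter_inv x) (push_letter x w) = w"
proof (cases w)
  case (Cons y ys)
  then show ?thesis
    using assms by (cases "y = letter_inv x"; cases ys) auto
qed simp

lemma reduced_word_foldr_push: "reduced_word v \<Longrightarrow> reduced_word (foldr push_letter u v)"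
  by (induction u) (auto intro: reduced_word_push_letter)

lemma foldr_push_Nil: "reduced_word u \<Longrightarrow> foldr push_letter u [] = u"
proof (induction u)
  case (Cons x u)
  then show ?case
    using reduced_word_tl[OF Cons.prems] by (cases u) auto
qed simp

lemma foldr_push_push_letter:
  assumes "reduced_word v" "reduced_word z"
  shows "foldr push_letter (push_letter x v) z = push_letter x (foldr push_letter v z)"
proof (cases v)
  case (Cons y v')
  have "reduced_word (foldr push_letter v' z)"
    using assms by (simp add: reduced_word_foldr_push)
  then show ?thesis
    using Cons push_letter_inv_cancel[of "foldr push_letter v' z" y] by auto
qed simp

lemma foldr_push_assoc:
  assumes "reduced_word v" "reduced_word z"
  shows "foldr push_letter (foldr push_letter u v) z = foldr push_letter u (foldr push_letter v z)"
  by (induction u) (simp_all add: assms foldr_push_push_letter reduced_word_foldr_push)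

definition word_inv :: "('a \<times> bool) list \<Rightarrow> ('a \<times> bool) list" where
  "word_inv w = rev (map letter_inv w)"

lemma reduced_word_snoc_snoc:
  "reduced_word (xs @ [x, y]) \<longleftrightarrow> y \<noteq> letter_inv x \<and> reduced_word (xs @ [x])"
  by (induction xs rule: reduced_word.induct) auto

lemma reduced_word_word_inv: "reduced_word w \<Longrightarrow> reduced_word (word_inv w)"
  unfolding word_inv_def
proof (induction w rule: reduced_word.induct)
  case (1 x y ys)
  then have "reduced_word (rev (map letter_inv ys) @ [letter_inv y, letter_inv x])"
    by (simp add: reduced_word_snoc_snoc) metis
  then show ?case by simp
qed auto

lemma foldr_push_word_inv: "reduced_word w \<Longrightarrow> foldr push_letter (word_inv w) w = []"
proof (induction w)
  case (Cons x w)
  have "foldr push_letter (word_inv (x # w)) (x # w)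
      = foldr push_letter (word_inv w) (push_letter (letter_inv x) (x # w))"
    by (simp add: word_inv_def)
  also have "\<dots> = foldr push_letter (word_inv w) w" by simp
  finally show ?case using Cons reduced_word_tl by metis
qed (simp add: word_inv_def)

lemma free_group_carrier: "carrier free_group = {w. reduced_word w}"
  by (simp add: free_group_def)

lemma free_group_mult: "x \<otimes>\<^bsub>free_group\<^esub> y = foldr push_letter x y"
  by (simp add: free_group_def word_mult_def)

lemma free_group_one: "\<one>\<^bsub>free_group\<^esub> = []"
  by (simp add: free_group_def)

lemma group_free_group: "group free_group"
proof (rule groupI)
  fix x assume "x \<in> carrier free_group"
  then show "\<exists>y\<in>carrier free_group. y \<otimes>\<^bsub>free_group\<^esub> x = \<one>\<^bsub>free_group\<^esub>"
    by (auto simp: free_group_carrier free_group_mult free_group_one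
             intro!: bexI[of _ "word_inv x"] foldr_push_word_inv reduced_word_word_inv)
qed (auto simp: free_group_carrier free_group_mult free_group_one
          intro: reduced_word_foldr_push foldr_push_assoc)

definition map_gens :: "('a \<Rightarrow> 'b) \<Rightarrow> ('a \<times> bool) list \<Rightarrow> ('b \<times> bool) list" where
  "map_gens f w = map (\<lambda>(s, e). (f s, e)) w"

lemma map_gens_simps [simp]:
  "map_gens f [] = []"
  "map_gens f (x # w) = (f (fst x), snd x) # map_gens f w"
  by (auto simp: map_gens_def split: prod.split)

lemma gens_map_gens: "fst ` set (map_gens f w) = f ` fst ` set w"
  by (induction w) auto

lemma map_gens_ident: "map_gens (\<lambda>s. s) w = w"
  by (induction w) auto

lemma map_gens_map_gens: "map_gens f (map_gens g w) = map_gens (f \<circ> g) w"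
  by (induction w) auto

lemma map_gens_cong: "(\<And>s. s \<in> fst ` set w \<Longrightarrow> f s = g s) \<Longrightarrow> map_gens f w = map_gens g w"
  by (induction w) auto

lemma letter_inv_map_iff:
  assumes "inj_on f {fst x, fst y}"
  shows "(f (fst y), snd y) = letter_inv (f (fst x), snd x) \<longleftrightarrow> y = letter_inv x"
  using assms by (cases x; cases y) (auto simp: letter_inv_def)

lemma reduced_word_map_gens:
  assumes "inj_on f (fst ` set w)"
  shows "reduced_word (map_gens f w) \<longleftrightarrow> reduced_word w"
  using assms
proof (induction w rule: reduced_word.induct)
  case (1 x y ys)
  have "inj_on f {fst x, fst y}"
    using "1.prems" by (rule inj_on_subset) auto
  then show ?case
    using 1 letter_inv_map_iff[of f x y] by (simp add: inj_on_subset)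
qed simp_all

lemma set_push_letter: "set (push_letter x w) \<subseteq> insert x (set w)"
  by (cases w) auto

lemma set_foldr_push: "set (foldr push_letter u v) \<subseteq> set u \<union> set v"
  by (induction u) (use set_push_letter in fastforce)+

lemma gens_foldr_push: "fst ` set (foldr push_letter u v) \<subseteq> fst ` set u \<union> fst ` set v"
  using set_foldr_push by blast

lemma map_gens_push_letter:
  assumes "inj_on f (fst ` insert x (set w))"
  shows "map_gens f (push_letter x w) = push_letter (f (fst x), snd x) (map_gens f w)"
proof (cases w)
  case (Cons y ys)
  have "inj_on f {fst x, fst y}"
    by (rule inj_on_subset[OF assms]) (use Cons in auto)
  then show ?thesis
    using Cons letter_inv_map_iff[of f x y] by (auto simp: letter_inv_def)
qed simp

lemma map_gens_foldr_push:
  assumes "inj_on f (fst ` (set u \<union> set v))"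
  shows "map_gens f (foldr push_letter u v) = foldr push_letter (map_gens f u) (map_gens f v)"
  using assms
proof (induction u)
  case (Cons x u)
  have "inj_on f (fst ` insert x (set (foldr push_letter u v)))"
    using Cons.prems set_foldr_push[of u v] by (auto intro: inj_on_subset)
  then show ?case using Cons by (simp add: map_gens_push_letter inj_on_subset)
qed simp

definition eval_letter :: "('a, 'b) monoid_scheme \<Rightarrow> 'a \<times> bool \<Rightarrow> 'a" where
  "eval_letter G x = (if snd x then inv\<^bsub>G\<^esub> (fst x) else fst x)"

lemma eval_word_Nil [simp]: "eval_word G [] = \<one>\<^bsub>G\<^esub>"
  by (simp add: eval_word_def)

lemma eval_word_Cons [simp]: "eval_word G (x # w) = eval_letter G x \<otimes>\<^bsub>G\<^esub> eval_word G w"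
  by (cases x) (simp add: eval_word_def eval_letter_def)

context group
begin

lemma eval_letter_closed: "fst x \<in> carrier G \<Longrightarrow> eval_letter G x \<in> carrier G"
  by (simp add: eval_letter_def)

lemma eval_word_closed: "fst ` set w \<subseteq> carrier G \<Longrightarrow> eval_word G w \<in> carrier G"
  by (induction w) (auto intro: eval_letter_closed)

lemma eval_letter_letter_inv:
  "fst x \<in> carrier G \<Longrightarrow> eval_letter G x \<otimes> eval_letter G (letter_inv x) = \<one>"
  by (simp add: eval_letter_def letter_inv_def)

lemma eval_word_map_gens_push_letter:
  assumes "f (fst x) \<in> carrier G" "f ` fst ` set w \<subseteq> carrier G"
  shows "eval_word G (map_gens f (push_letter x w))
           = eval_letter G (f (fst x), snd x) \<otimes> eval_word G (map_gens f w)"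
proof (cases w)
  case (Cons y ys)
  have "fst ` set (map_gens f ys) \<subseteq> carrier G"
    using assms(2) Cons by (simp add: gens_map_gens)
  then have closed: "eval_letter G (f (fst x), snd x) \<in> carrier G"
    "eval_letter G (f (fst y), snd y) \<in> carrier G" "eval_word G (map_gens f ys) \<in> carrier G"
    using assms Cons by (auto intro!: eval_letter_closed eval_word_closed)
  show ?thesis
  proof (cases "y = letter_inv x")
    case True
    then show ?thesis
      using Cons closed eval_letter_letter_inv[of "(f (fst x), snd x)"] assms(1)
      by (simp add: m_assoc [symmetric] letter_inv_def)
  qed (use Cons in simp)
qed (use assms in \<open>simp add: eval_letter_closed\<close>)

lemma eval_word_map_gens_foldr_push:
  assumes "f ` fst ` set u \<subseteq> carrier G" "f ` fst ` set v \<subseteq> carrier G"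
  shows "eval_word G (map_gens f (foldr push_letter u v))
           = eval_word G (map_gens f u) \<otimes> eval_word G (map_gens f v)"
  using assms(1)
proof (induction u)
  case (Cons x u)
  have "f ` fst ` set (foldr push_letter u v) \<subseteq> f ` (fst ` set u \<union> fst ` set v)"
    by (rule image_mono[OF gens_foldr_push])
  moreover have "f ` (fst ` set u \<union> fst ` set v) \<subseteq> carrier G"
    using Cons.prems assms(2) by (simp add: image_Un)
  ultimately have "f ` fst ` set (foldr push_letter u v) \<subseteq> carrier G"
    by (rule order_trans)
  then show ?case
    using Cons assms(2)
    by (simp add: eval_word_map_gens_push_letter m_assoc eval_letter_closed eval_word_closed
                  gens_map_gens)
qed (simp add: assms(2) eval_word_closed gens_map_gens)

lemma eval_word_map_gens_hom:
  assumes "range f \<subseteq> carrier G"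
  shows "(\<lambda>w. eval_word G (map_gens f w)) \<in> hom free_group G"
proof -
  have gens: "f ` fst ` set w \<subseteq> carrier G" for w
    using assms by auto
  show ?thesis
    by (rule homI)
       (simp_all add: gens eval_word_closed eval_word_map_gens_foldr_push free_group_mult
                      gens_map_gens)
qed

end

lemma eval_word_hom:
  assumes "group_hom G H h" "fst ` set w \<subseteq> carrier G"
  shows "h (eval_word G w) = eval_word H (map_gens h w)"
proof -
  interpret group_hom G H h by fact
  show ?thesis
    using assms(2) by (induction w) (auto simp: eval_letter_def G.eval_word_closed)
qed

lemma free_basis_subset: "free_basis G S \<Longrightarrow> T \<subseteq> S \<Longrightarrow> free_basis G T"
  unfolding free_basis_def by blast

lemma free_basis_hom_preimage:
  assumes h: "group_hom G H h" and S: "S \<subseteq> carrier G" "inj_on h S"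
    and free: "free_basis H (h ` S)"
  shows "free_basis G S"
  unfolding free_basis_def
proof (intro conjI allI impI)
  interpret group_hom G H h by (fact h)
  fix w assume w: "w \<noteq> [] \<and> reduced_word w \<and> fst ` set w \<subseteq> S"
  have "reduced_word (map_gens h w)"
    using w S(2) by (simp add: reduced_word_map_gens inj_on_subset)
  moreover have "fst ` set (map_gens h w) \<subseteq> h ` S"
    using w by (auto simp: gens_map_gens)
  moreover have "map_gens h w \<noteq> []"
    using w by (cases w) auto
  ultimately have "eval_word H (map_gens h w) \<noteq> \<one>\<^bsub>H\<^esub>"
    using free by (simp add: free_basis_def)
  then show "eval_word G w \<noteq> \<one>\<^bsub>G\<^esub>"
    using eval_word_hom[OF h] w S(1) by fastforce
qed (fact S(1))

lemma big_if_free_pair: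
  fixes G (structure)
  assumes G: "group G" and "x \<noteq> y" and free: "free_basis G {x, y}"
  shows "big G"
proof -
  interpret group G by (fact G)
  have xy: "x \<in> carrier G" "y \<in> carrier G"
    using free by (auto simp: free_basis_def)
  define H where "H = generate G {x, y}"
  let ?commutator = "[(x, False), (y, False), (x, True), (y, True)]"
  have "reduced_word ?commutator" "fst ` set ?commutator \<subseteq> {x, y}"
    using \<open>x \<noteq> y\<close> by (auto simp: letter_inv_def)
  then have "eval_word G ?commutator \<noteq> \<one>"
    using free unfolding free_basis_def by blast
  then have "x \<otimes> y \<otimes> inv x \<otimes> inv y \<noteq> \<one>"
    using xy by (simp add: eval_letter_def m_assoc)
  moreover have "y \<otimes> x \<otimes> inv x \<otimes> inv y = \<one>"
    using xy by (simp add: m_assoc)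
  ultimately have "x \<otimes> y \<noteq> y \<otimes> x"
    by metis
  moreover have "x \<in> H" "y \<in> H"
    by (auto simp: H_def intro: generate.incl)
  ultimately show ?thesis
    unfolding big_def using xy free
    by (intro exI[of _ H] exI[of _ "{x, y}"]) (auto simp: H_def generate_is_subgroup)
qed

lemma big_if_hom_onto_free_pair:
  assumes h: "group_hom G H h" and xy: "x \<in> carrier G" "y \<in> carrier G" "h x \<noteq> h y"
    and free: "free_basis H {h x, h y}"
  shows "big G"
proof -
  have "inj_on h {x, y}"
    using xy(3) by (auto simp: inj_on_def)
  then have "free_basis G {x, y}"
    using free_basis_hom_preimage[OF h] xy free by simp
  moreover have "x \<noteq> y"
    using xy(3) by blast
  ultimately show ?thesis
    using h by (intro big_if_free_pair) (simp_all add: group_hom_def)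
qed

section \<open>The semidirect product of a free group of rank k with \<int>/k\<close>

definition shift_word :: "int \<Rightarrow> int \<Rightarrow> (int \<times> bool) list \<Rightarrow> (int \<times> bool) list" where
  "shift_word k i w = map_gens (\<lambda>s. (s + i) mod k) w"

text \<open>A pair (w, i) stands for w t^i, where t shifts every generator index by 1 modulo k.\<close>

definition shift_semidirect :: "int \<Rightarrow> ((int \<times> bool) list \<times> int) monoid" where
  "shift_semidirect k =
     \<lparr>carrier = {(w, i). reduced_word w \<and> fst ` set w \<subseteq> {0..<k} \<and> i \<in> {0..<k}},
      monoid.mult = (\<lambda>(w, i) (v, j). (foldr push_letter w (shift_word k i v), (i + j) mod k)),
      one = ([], 0)\<rparr>"

lemma shift_semidirect_carrier:
  "(w, i) \<in> carrier (shift_semidirect k) \<longleftrightarrow>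
     reduced_word w \<and> fst ` set w \<subseteq> {0..<k} \<and> 0 \<le> i \<and> i < k"
  by (simp add: shift_semidirect_def)

lemma shift_semidirect_mult [simp]:
  "(w, i) \<otimes>\<^bsub>shift_semidirect k\<^esub> (v, j) = (foldr push_letter w (shift_word k i v), (i + j) mod k)"
  by (simp add: shift_semidirect_def)

lemma shift_semidirect_one [simp]: "\<one>\<^bsub>shift_semidirect k\<^esub> = ([], 0)"
  by (simp add: shift_semidirect_def)

lemma inj_on_shift_mod: "k > 0 \<Longrightarrow> inj_on (\<lambda>s::int. (s + i) mod k) {0..<k}"
proof (rule inj_onI)
  fix x y :: int
  assume "k > 0" "x \<in> {0..<k}" "y \<in> {0..<k}" "(x + i) mod k = (y + i) mod k"
  then have "(x + i - i) mod k = (y + i - i) mod k"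
    by (metis mod_diff_left_eq)
  with \<open>x \<in> {0..<k}\<close> \<open>y \<in> {0..<k}\<close> show "x = y" by simp
qed

lemma shift_word_Nil [simp]: "shift_word k i [] = []"
  by (simp add: shift_word_def)

lemma gens_shift_word: "k > 0 \<Longrightarrow> fst ` set (shift_word k i w) \<subseteq> {0..<k}"
  by (auto simp: shift_word_def gens_map_gens)

lemma reduced_word_shift_word:
  assumes "k > 0" "fst ` set w \<subseteq> {0..<k}"
  shows "reduced_word (shift_word k i w) \<longleftrightarrow> reduced_word w"
  unfolding shift_word_def
  using assms by (intro reduced_word_map_gens inj_on_subset[OF inj_on_shift_mod])

lemma shift_word_foldr_push:
  assumes "k > 0" "fst ` set u \<subseteq> {0..<k}" "fst ` set v \<subseteq> {0..<k}"
  shows "shift_word k i (foldr push_letter u v)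
           = foldr push_letter (shift_word k i u) (shift_word k i v)"
  unfolding shift_word_def
  by (rule map_gens_foldr_push, rule inj_on_subset[OF inj_on_shift_mod[OF assms(1)]])
     (use assms(2,3) in auto)

lemma shift_word_shift_word: "shift_word k i (shift_word k j w) = shift_word k ((i + j) mod k) w"
  unfolding shift_word_def map_gens_map_gens
  by (rule map_gens_cong) (simp add: mod_add_left_eq mod_add_right_eq ac_simps)

lemma shift_word_0: "fst ` set w \<subseteq> {0..<k} \<Longrightarrow> shift_word k 0 w = w"
  unfolding shift_word_def
  by (subst map_gens_ident[symmetric], rule map_gens_cong) auto

lemma shift_semidirect_mult_closed:
  assumes "k > 0" "(w, i) \<in> carrier (shift_semidirect k)" "(v, j) \<in> carrier (shift_semidirect k)"
  shows "(w, i) \<otimes>\<^bsub>shift_semidirect k\<^esub> (v, j) \<in> carrier (shift_semidirect k)"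
proof -
  have "fst ` set w \<subseteq> {0..<k}"
    using assms(2) by (simp add: shift_semidirect_carrier)
  then have "fst ` set (foldr push_letter w (shift_word k i v)) \<subseteq> {0..<k}"
    using gens_foldr_push[of w "shift_word k i v"] gens_shift_word[OF assms(1), of i v] by blast
  then show ?thesis
    using assms
    by (simp add: shift_semidirect_carrier reduced_word_foldr_push reduced_word_shift_word)
qed

lemma shift_semidirect_mult_assoc:
  assumes k: "k > 0" and "(w, i) \<in> carrier (shift_semidirect k)"
    and "(v, j) \<in> carrier (shift_semidirect k)" "(u, l) \<in> carrier (shift_semidirect k)"
  shows "(w, i) \<otimes>\<^bsub>shift_semidirect k\<^esub> (v, j) \<otimes>\<^bsub>shift_semidirect k\<^esub> (u, l)
       = (w, i) \<otimes>\<^bsub>shift_semidirect k\<^esub> ((v, j) \<otimes>\<^bsub>shift_semidirect k\<^esub> (u, l))"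
proof -
  have r: "reduced_word v" "fst ` set v \<subseteq> {0..<k}" "reduced_word u" "fst ` set u \<subseteq> {0..<k}"
    using assms by (auto simp: shift_semidirect_carrier)
  have "foldr push_letter w (shift_word k i (foldr push_letter v (shift_word k j u)))
      = foldr push_letter w (foldr push_letter (shift_word k i v) (shift_word k ((i + j) mod k) u))"
    using r k by (simp add: shift_word_foldr_push gens_shift_word shift_word_shift_word)
  also have "\<dots> = foldr push_letter (foldr push_letter w (shift_word k i v))
                     (shift_word k ((i + j) mod k) u)"
    using r k by (simp add: foldr_push_assoc reduced_word_shift_word gens_shift_word)
  finally show ?thesis
    by (simp add: mod_add_left_eq mod_add_right_eq add.assoc)
qed

lemma shift_semidirect_left_inverse:
  assumes k: "k > 0" and x: "(w, i) \<in> carrier (shift_semidirect k)"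
  shows "\<exists>y\<in>carrier (shift_semidirect k). y \<otimes>\<^bsub>shift_semidirect k\<^esub> (w, i) = \<one>\<^bsub>shift_semidirect k\<^esub>"
proof
  define j where "j = (k - i) mod k"
  have r: "reduced_word w" "fst ` set w \<subseteq> {0..<k}"
    using x by (auto simp: shift_semidirect_carrier)
  then have gens: "fst ` set (word_inv w) \<subseteq> {0..<k}"
    by (force simp: word_inv_def letter_inv_def)
  show "(shift_word k j (word_inv w), j) \<in> carrier (shift_semidirect k)"
    using r gens k by (simp add: shift_semidirect_carrier reduced_word_shift_word gens_shift_word
                                 reduced_word_word_inv j_def)
  have "foldr push_letter (shift_word k j (word_inv w)) (shift_word k j w) = []"
    using r gens k by (simp flip: shift_word_foldr_push add: foldr_push_word_inv)
  then show "(shift_word k j (word_inv w), j) \<otimes>\<^bsub>shift_semidirect k\<^esub> (w, i) = \<one>\<^bsub>shift_semidirect k\<^esub>"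
    by (simp add: j_def mod_add_left_eq)
qed

lemma group_shift_semidirect:
  assumes "k > 0"
  shows "group (shift_semidirect k)"
proof (rule groupI)
  show "\<one>\<^bsub>shift_semidirect k\<^esub> \<in> carrier (shift_semidirect k)"
    using assms by (simp add: shift_semidirect_carrier)
next
  fix x assume "x \<in> carrier (shift_semidirect k)"
  then show "\<one>\<^bsub>shift_semidirect k\<^esub> \<otimes>\<^bsub>shift_semidirect k\<^esub> x = x"
    by (cases x) (simp add: shift_semidirect_carrier shift_word_0 foldr_push_Nil)
qed (use assms in \<open>auto simp: split_paired_all simp del: shift_semidirect_mult shift_semidirect_one
                     intro: shift_semidirect_mult_closed shift_semidirect_mult_assoc
                            shift_semidirect_left_inverse\<close>)

definition generator :: "int \<Rightarrow> (int \<times> bool) list \<times> int" where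
  "generator i = ([(i, False)], 0)"

definition rotation :: "(int \<times> bool) list \<times> int" where
  "rotation = ([], 1)"

lemma generator_closed: "0 \<le> i \<Longrightarrow> i < k \<Longrightarrow> generator i \<in> carrier (shift_semidirect k)"
  by (simp add: generator_def shift_semidirect_carrier)

lemma eval_letter_generator:
  assumes "0 \<le> i" "i < k"
  shows "eval_letter (shift_semidirect k) (generator i, e) = ([(i, e)], 0)"
proof -
  interpret group "shift_semidirect k"
    using assms by (simp add: group_shift_semidirect)
  have "inv\<^bsub>shift_semidirect k\<^esub> (generator i) = ([(i, True)], 0)"
    using assms
    by (intro inv_equality)
       (simp_all add: generator_def shift_semidirect_carrier shift_word_def letter_inv_def)
  then show ?thesis
    by (simp add: eval_letter_def generator_def)
qed

lemma eval_word_generators: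
  assumes "k > 0" "reduced_word w" "fst ` set w \<subseteq> {0..<k}"
  shows "eval_word (shift_semidirect k) (map_gens generator w) = (w, 0)"
  using assms(2,3)
proof (induction w)
  case (Cons x w)
  then have "eval_word (shift_semidirect k) (map_gens generator w) = (w, 0)"
    by (auto dest: reduced_word_tl)
  then show ?case
    using Cons.prems eval_letter_generator[of "fst x" k "snd x"]
    by (simp add: shift_word_0 push_letter_reduced)
qed simp

lemma free_basis_generators:
  assumes "k > 0"
  shows "free_basis (shift_semidirect k) (generator ` {0..<k})"
  unfolding free_basis_def
proof (intro conjI allI impI)
  show "generator ` {0..<k} \<subseteq> carrier (shift_semidirect k)"
    by (auto intro: generator_closed)
  fix w assume w: "w \<noteq> [] \<and> reduced_word w \<and> fst ` set w \<subseteq> generator ` {0..<k}"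
  define index where "index t = fst (hd (fst t))" for t :: "(int \<times> bool) list \<times> int"
  define u where "u = map_gens index w"
  have index_inverse: "generator (index t) = t" if "t \<in> fst ` set w" for t
    using that w by (auto simp: index_def generator_def)
  have "map_gens generator u = w"
    unfolding u_def map_gens_map_gens
    by (subst map_gens_cong[where g = "\<lambda>s. s"]) (simp_all add: index_inverse map_gens_ident)
  moreover have "inj_on index (fst ` set w)"
    by (metis index_inverse inj_on_inverseI)
  then have "reduced_word u"
    using w by (simp add: u_def reduced_word_map_gens)
  moreover have "fst ` set u \<subseteq> {0..<k}"
    using w by (auto simp: u_def gens_map_gens index_def generator_def)
  ultimately have "eval_word (shift_semidirect k) w = (u, 0)"
    using eval_word_generators[OF assms] by metis
  moreover have "u \<noteq> []"
    using w by (cases w) (auto simp: u_def)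
  ultimately show "eval_word (shift_semidirect k) w \<noteq> \<one>\<^bsub>shift_semidirect k\<^esub>"
    by simp
qed

section \<open>The one-relator group\<close>

lemma (in group) int_pow_conj:
  assumes "a \<in> carrier G" "x \<in> carrier G"
  shows "(inv a \<otimes> x \<otimes> a) [^] (i :: int) = inv a \<otimes> x [^] i \<otimes> a"
proof -
  have "inv a \<otimes> x \<otimes> a \<otimes> (inv a \<otimes> y \<otimes> a) = inv a \<otimes> (x \<otimes> y) \<otimes> a"
    if "x \<in> carrier G" "y \<in> carrier G" for x y
    using that assms by (simp add: m_assoc) (simp flip: m_assoc)
  then have "group_hom G G (\<lambda>x. inv a \<otimes> x \<otimes> a)"
    by unfold_locales (auto intro!: homI simp: assms)
  from group_hom.hom_int_pow[OF this assms(2)] show ?thesis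
    by simp
qed

definition semidirect_rep :: "int \<Rightarrow> (bool \<times> bool) list \<Rightarrow> (int \<times> bool) list \<times> int" where
  "semidirect_rep k w =
     eval_word (shift_semidirect k) (map_gens (\<lambda>s. if s then ([(0, True)], 1) else generator 0) w)"

lemma gen_a_closed: "gen_a \<in> carrier free_group"
  by (simp add: gen_a_def free_group_carrier)

lemma gen_b_closed: "gen_b \<in> carrier free_group"
  by (simp add: gen_b_def free_group_carrier)

context
  fixes k :: int
  assumes k: "k \<ge> 2"
begin

interpretation SD: group "shift_semidirect k"
  using k by (simp add: group_shift_semidirect)

lemma semidirect_rep_hom: "group_hom free_group (shift_semidirect k) (semidirect_rep k)"
proof -
  have "range (\<lambda>s. if s then ([(0, True)], 1) else generator 0) \<subseteq> carrier (shift_semidirect k)"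
    using k by (auto simp: generator_def shift_semidirect_carrier)
  then show ?thesis
    unfolding group_hom_def group_hom_axioms_def semidirect_rep_def
    by (simp add: group_free_group SD.is_group SD.eval_word_map_gens_hom)
qed

interpretation rep: group_hom free_group "shift_semidirect k" "semidirect_rep k"
  by (fact semidirect_rep_hom)

lemma semidirect_rep_gen_a: "semidirect_rep k gen_a = generator 0"
  by (simp add: semidirect_rep_def gen_a_def eval_letter_def generator_def shift_word_def)

lemma semidirect_rep_gen_b: "semidirect_rep k gen_b = ([(0, True)], 1)"
  using k by (simp add: semidirect_rep_def gen_b_def eval_letter_def shift_semidirect_carrier)

lemma semidirect_rep_ab: "semidirect_rep k (gen_a \<otimes>\<^bsub>free_group\<^esub> gen_b) = rotation"
  using k by (simp add: gen_a_closed gen_b_closed semidirect_rep_gen_a semidirect_rep_gen_b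
                        generator_def rotation_def shift_word_def letter_inv_def)

lemma semidirect_rep_ba:
  "semidirect_rep k (gen_b \<otimes>\<^bsub>free_group\<^esub> gen_a) =
     inv\<^bsub>shift_semidirect k\<^esub> (generator 0) \<otimes>\<^bsub>shift_semidirect k\<^esub> rotation
       \<otimes>\<^bsub>shift_semidirect k\<^esub> generator 0"
proof -
  have a: "generator 0 \<in> carrier (shift_semidirect k)"
    using k by (simp add: generator_closed)
  have b: "([(0, True)], 1) \<in> carrier (shift_semidirect k)"
    using k by (simp add: shift_semidirect_carrier)
  have "semidirect_rep k (gen_b \<otimes>\<^bsub>free_group\<^esub> gen_a)
      = ([(0, True)], 1) \<otimes>\<^bsub>shift_semidirect k\<^esub> generator 0"
    by (simp only: rep.hom_mult gen_a_closed gen_b_closed semidirect_rep_gen_a semidirect_rep_gen_b)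
  also have "\<dots> = inv\<^bsub>shift_semidirect k\<^esub> (generator 0) \<otimes>\<^bsub>shift_semidirect k\<^esub>
        (generator 0 \<otimes>\<^bsub>shift_semidirect k\<^esub> ([(0, True)], 1)) \<otimes>\<^bsub>shift_semidirect k\<^esub> generator 0"
    using a b by (simp del: shift_semidirect_one flip: SD.m_assoc)
  also have "generator 0 \<otimes>\<^bsub>shift_semidirect k\<^esub> ([(0, True)], 1) = rotation"
    using semidirect_rep_ab
    by (simp add: gen_a_closed gen_b_closed semidirect_rep_gen_a semidirect_rep_gen_b)
  finally show ?thesis .
qed

lemma rotation_closed: "rotation \<in> carrier (shift_semidirect k)"
  using k by (simp add: rotation_def shift_semidirect_carrier)

lemma rotation_pow_eq_one:
  assumes "k dvd n"
  shows "rotation [^]\<^bsub>shift_semidirect k\<^esub> (n :: int) = \<one>\<^bsub>shift_semidirect k\<^esub>"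
proof -
  have pow_nat: "rotation [^]\<^bsub>shift_semidirect k\<^esub> j = ([], int j mod k)" for j :: nat
    by (induction j) (simp_all add: rotation_def mod_add_left_eq mod_add_right_eq ac_simps)
  obtain t where "n = k * t"
    using assms by blast
  then have "rotation [^]\<^bsub>shift_semidirect k\<^esub> n
      = (rotation [^]\<^bsub>shift_semidirect k\<^esub> nat k) [^]\<^bsub>shift_semidirect k\<^esub> t"
    using k by (simp add: SD.int_pow_pow rotation_closed flip: int_pow_int)
  also have "\<dots> = \<one>\<^bsub>shift_semidirect k\<^esub> [^]\<^bsub>shift_semidirect k\<^esub> t"
    using k by (simp add: pow_nat)
  finally show ?thesis
    by (simp del: shift_semidirect_one)
qed

lemma rotation_conj_generator:
  assumes "0 \<le> i" "i < k"
  shows "rotation \<otimes>\<^bsub>shift_semidirect k\<^esub> generator i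
           \<otimes>\<^bsub>shift_semidirect k\<^esub> inv\<^bsub>shift_semidirect k\<^esub> rotation
         = generator ((i + 1) mod k)"
proof -
  have "inv\<^bsub>shift_semidirect k\<^esub> rotation = ([], k - 1)"
    using k by (intro SD.inv_equality) (simp_all add: rotation_def shift_semidirect_carrier)
  then show ?thesis
    using k by (simp add: rotation_def generator_def shift_word_def add.commute)
qed

lemma semidirect_rep_relator:
  assumes "k dvd n" "k dvd m"
  shows "semidirect_rep k (relator n m) = \<one>\<^bsub>shift_semidirect k\<^esub>"
  using assms k
  by (simp add: relator_def gen_a_closed gen_b_closed rep.hom_int_pow semidirect_rep_ab
                semidirect_rep_ba SD.int_pow_conj generator_closed rotation_closed rotation_pow_eq_one
           del: shift_semidirect_one)

end

lemma relator_closed: "relator n m \<in> carrier free_group"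
proof -
  interpret group free_group by (rule group_free_group)
  show ?thesis
    by (simp add: relator_def gen_a_closed gen_b_closed)
qed

lemma relator_closure_normal: "relator_closure n m \<lhd> free_group"
proof -
  interpret group free_group by (rule group_free_group)
  show ?thesis
    unfolding relator_closure_def
  proof (rule normal_generateI)
    fix h g :: "(bool \<times> bool) list"
    assume "h \<in> {g \<otimes>\<^bsub>free_group\<^esub> relator n m \<otimes>\<^bsub>free_group\<^esub> inv\<^bsub>free_group\<^esub> g | g. g \<in> carrier free_group}"
      and g: "g \<in> carrier free_group"
    then obtain g' where g': "g' \<in> carrier free_group"
      and h: "h = g' \<otimes>\<^bsub>free_group\<^esub> relator n m \<otimes>\<^bsub>free_group\<^esub> inv\<^bsub>free_group\<^esub> g'"
      by blast
    have "g \<otimes>\<^bsub>free_group\<^esub> h \<otimes>\<^bsub>free_group\<^esub> inv\<^bsub>free_group\<^esub> g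
        = (g \<otimes>\<^bsub>free_group\<^esub> g') \<otimes>\<^bsub>free_group\<^esub> relator n m
            \<otimes>\<^bsub>free_group\<^esub> inv\<^bsub>free_group\<^esub> (g \<otimes>\<^bsub>free_group\<^esub> g')"
      using g g' h by (simp add: relator_closed m_assoc inv_mult_group)
    then show "g \<otimes>\<^bsub>free_group\<^esub> h \<otimes>\<^bsub>free_group\<^esub> inv\<^bsub>free_group\<^esub> g
        \<in> {g \<otimes>\<^bsub>free_group\<^esub> relator n m \<otimes>\<^bsub>free_group\<^esub> inv\<^bsub>free_group\<^esub> g | g. g \<in> carrier free_group}"
      using g g' by blast
  qed (auto simp: relator_closed)
qed

lemma relator_closure_subset_kernel:
  assumes "group_hom free_group H h" "h (relator n m) = \<one>\<^bsub>H\<^esub>"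
  shows "relator_closure n m \<subseteq> kernel free_group H h"
proof -
  interpret group_hom free_group H h by fact
  show ?thesis
    unfolding relator_closure_def
    by (rule G.generate_subgroup_incl[OF _ subgroup_kernel])
       (auto simp: kernel_def relator_closed assms(2))
qed

lemma group_one_relator_group: "group (one_relator_group n m)"
  unfolding one_relator_group_def by (rule normal.factorgroup_is_group[OF relator_closure_normal])

lemma coset_in_one_relator_group:
  "w \<in> carrier free_group \<Longrightarrow> relator_closure n m #>\<^bsub>free_group\<^esub> w \<in> carrier (one_relator_group n m)"
  unfolding one_relator_group_def
  by (rule hom_in_carrier[OF normal.r_coset_hom_Mod[OF relator_closure_normal]])

lemma one_relator_group_to_semidirect:
  assumes "k \<ge> 2" "k dvd n" "k dvd m"
  obtains g where "group_hom (one_relator_group n m) (shift_semidirect k) g"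
    and "\<And>w. w \<in> carrier free_group \<Longrightarrow>
           g (relator_closure n m #>\<^bsub>free_group\<^esub> w) = semidirect_rep k w"
proof -
  interpret rep: group_hom free_group "shift_semidirect k" "semidirect_rep k"
    using semidirect_rep_hom[OF assms(1)] .
  obtain g where "g \<in> hom (one_relator_group n m) (shift_semidirect k)"
    and "\<And>w. w \<in> carrier free_group \<Longrightarrow>
           g (relator_closure n m #>\<^bsub>free_group\<^esub> w) = semidirect_rep k w"
    using rep.FactGroup_universal_kernel[OF relator_closure_normal
            relator_closure_subset_kernel[OF rep.group_hom_axioms semidirect_rep_relator[OF assms]]]
    unfolding one_relator_group_def by blast
  then show ?thesis
    using that group_one_relator_group rep.H.is_group
    by (simp add: group_hom_def group_hom_axioms_def)
qed

theorem mainTheorem7: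
  fixes n m :: int
  assumes "\<bar>gcd n m\<bar> \<ge> 2"
  shows "big (one_relator_group n m)"
proof -
  define k where "k = gcd n m"
  have k: "k \<ge> 2" "k dvd n" "k dvd m"
    using assms by (simp_all add: k_def)
  obtain g where g: "group_hom (one_relator_group n m) (shift_semidirect k) g"
    and g_coset: "\<And>w. w \<in> carrier free_group \<Longrightarrow>
                   g (relator_closure n m #>\<^bsub>free_group\<^esub> w) = semidirect_rep k w"
    using one_relator_group_to_semidirect[OF k] by blast
  interpret F: group free_group by (rule group_free_group)
  interpret rep: group_hom free_group "shift_semidirect k" "semidirect_rep k"
    using semidirect_rep_hom[OF k(1)] .
  define c where "c = gen_a \<otimes>\<^bsub>free_group\<^esub> gen_b"
  have c: "c \<in> carrier free_group" "semidirect_rep k c = rotation"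
    using semidirect_rep_ab[OF k(1)] by (simp_all add: c_def gen_a_closed gen_b_closed)
  let ?x = "relator_closure n m #>\<^bsub>free_group\<^esub> gen_a"
  let ?y = "relator_closure n m #>\<^bsub>free_group\<^esub> (c \<otimes>\<^bsub>free_group\<^esub> gen_a \<otimes>\<^bsub>free_group\<^esub> inv\<^bsub>free_group\<^esub> c)"
  have "?x \<in> carrier (one_relator_group n m)" "?y \<in> carrier (one_relator_group n m)"
    using c by (simp_all add: coset_in_one_relator_group gen_a_closed)
  moreover have "g ?x = generator 0" "g ?y = generator 1"
    using k c by (simp_all add: g_coset gen_a_closed semidirect_rep_gen_a rotation_conj_generator)
  moreover have "free_basis (shift_semidirect k) {generator 0, generator 1}"
    using k by (intro free_basis_subset[OF free_basis_generators]) auto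
  ultimately show ?thesis
    by (intro big_if_hom_onto_free_pair[OF g, of ?x ?y]) (simp_all add: generator_def)
qed

end
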